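(* Let $\ell\ge1$ and $0\le m\le\ell$ be integers, and let all objects be as defined in the context. For every integer $d\ge1$, the number $\dim\ker(\hat{\mathcal{M}}_{\ell,m})^d-\dim\ker(\hat{\mathcal{M}}_{\ell,m})^{d-1}$ equals the coefficient of $q^{\left\lfloor\frac{m(\ell-m)-(d-1)}{2}\right\rfloor}$ in the $q$-binomial coefficient $\begin{bmatrix}\ell\\ m\end{bmatrix}_q$ (taken to be $0$ if this exponent is negative).
   Context: Let $\mathcal{F}$ be a complex vector space carrying linear operators $\hat b_1,\dots,\hat b_\ell,\hat b_1',\dots,\hat b_\ell'$ satisfying $\{\hat b_j,\hat b_k\}=\{\hat b_j',\hat b_k'\}=0$ and $\{\hat b_j,\hat b_k'\}=\delta_{jk}$ (with $\{A,B\}=AB+BA$), together with a vector $|\mathrm{right}\rangle$ with $\hat b_k|\mathrm{right}\rangle=0$ for all $k$, such that the $2^\ell$ vectors $(\hat b_1')^{\nu_1}\cdots(\hat b_\ell')^{\nu_\ell}|\mathrm{right}\rangle$, $\nu_k\in\{0,1\}$, form a basis of $\mathcal{F}$. Define $\hat{\mathcal{M}}_\ell=\sum_{k=1}^{\ell-1}\hat b_{k+1}'\hat b_k$, $\hat{\mathcal{N}}_\ell=\sum_{k=1}^\ell \hat b_k'\hat b_k$, $\mathcal{V}_{\ell,m}=\{\psi:\hat{\mathcal{N}}_\ell\psi=m\psi\}$, and let $\hat{\mathcal{M}}_{\ell,m}$ be the restriction of $\hat{\mathcal{M}}_\ell$ to $\mathcal{V}_{\ell,m}$, with $(\hat{\mathcal{M}}_{\ell,m})^0$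 the identity. The $q$-binomial coefficient is the polynomial $\begin{bmatrix}n\\ k\end{bmatrix}_q=\frac{[n]_q!}{[k]_q!\,[n-k]_q!}$, where $[j]_q=\frac{1-q^j}{1-q}$ and $[j]_q!=\prod_{i=1}^j[i]_q$ (with $[0]_q!=1$). *)

theory Defs
  imports Complex_Main "HOL-Computational_Algebra.Polynomial"
begin

definition qint :: "nat \<Rightarrow> int poly" where
  "qint j = (\<Sum>i<j. monom 1 i)"

definition qfact :: "nat \<Rightarrow> int poly" where
  "qfact j = (\<Prod>i=1..j. qint i)"

(* q-binomial coefficient [n choose k]_q = [n]_q! / ([k]_q! [n-k]_q!)  (exact polynomial division) *)
definition qbinom :: "nat \<Rightarrow> nat \<Rightarrow> int poly" where
  "qbinom n k = qfact n div (qfact k * qfact (n - k))"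

(* basis vector (b'_1)^{nu_1} ... (b'_l)^{nu_l} |right>, where S = {k. nu_k = 1} *)
definition fock_vec :: "(nat \<Rightarrow> 'v \<Rightarrow> 'v) \<Rightarrow> 'v \<Rightarrow> nat set \<Rightarrow> 'v" where
  "fock_vec b' r S = foldr (\<lambda>k v. b' k v) (sorted_list_of_set S) r"

definition Mop :: "nat \<Rightarrow> (nat \<Rightarrow> 'v \<Rightarrow> 'v) \<Rightarrow> (nat \<Rightarrow> 'v \<Rightarrow> 'v) \<Rightarrow> 'v \<Rightarrow> 'v::comm_monoid_add" where
  "Mop l b b' \<psi> = (\<Sum>k=1..l-1. b' (k+1) (b k \<psi>))"

definition Nop :: "nat \<Rightarrow> (nat \<Rightarrow> 'v \<Rightarrow> 'v) \<Rightarrow> (nat \<Rightarrow> 'v \<Rightarrow> 'v) \<Rightarrow> 'v \<Rightarrow> 'v::comm_monoid_add" where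
  "Nop l b b' \<psi> = (\<Sum>k=1..l. b' k (b k \<psi>))"

definition Vsp :: "(complex \<Rightarrow> 'v \<Rightarrow> 'v) \<Rightarrow> nat \<Rightarrow> nat \<Rightarrow> (nat \<Rightarrow> 'v \<Rightarrow> 'v) \<Rightarrow> (nat \<Rightarrow> 'v \<Rightarrow> 'v) \<Rightarrow> 'v::comm_monoid_add set" where
  "Vsp scale l m b b' = {\<psi>. Nop l b b' \<psi> = scale (of_nat m) \<psi>}"

(* kernel of (M_{l,m})^d, M_{l,m} the restriction of M_l to V_{l,m} (which M_l preserves) *)
definition kerMpow :: "(complex \<Rightarrow> 'v \<Rightarrow> 'v) \<Rightarrow> nat \<Rightarrow> nat \<Rightarrow> (nat \<Rightarrow> 'v \<Rightarrow> 'v) \<Rightarrow> (nat \<Rightarrow> 'v \<Rightarrow> 'v) \<Rightarrow> nat \<Rightarrow> 'v::comm_monoid_add set" where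
  "kerMpow scale l m b b' d = {\<psi> \<in> Vsp scale l m b b'. (Mop l b b' ^^ d) \<psi> = 0}"

end

theory Submission
  imports Defs
begin

(*
  In the basis of the Fock space indexed by the subsets S of {1..l}, the number operator
  multiplies the vector of S by |S| and M_l moves a particle from k to k + 1, so V_{l,m} is
  spanned by the m-subsets. Together with F = sum_k k (l - k) b'_k b_{k+1}, M_l generates an
  sl_2-action in which the vector of S has weight w(S) = 2 sum(S) - m (l + 1). In an sl_2-module
  with weights bounded below, E^d is injective on weight t when t + d <= 0, and otherwise maps
  weight t onto weight t + 2d (by injectivity on the mirror weight). The reflection
  S |-> l + 1 - S negates weights, and counting gives dim ker M^d = #{S. -d < w(S) <= d}.
  Passing from d - 1 to d adds, up to reflection, the subsets of weight -d or 1 - d, i.e. those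
  with sum(S) - m (m + 1) / 2 = floor ((m (l - m) - (d - 1)) / 2); and the Gaussian binomial is
  the generating function of the m-subsets by exactly this excess.
*)

sublocale vector_space \<subseteq> endo: vector_space_pair scale scale ..

context vector_space
begin

lemma linear_funpow:
  assumes "Vector_Spaces.linear scale scale f"
  shows "Vector_Spaces.linear scale scale (f ^^ n)"
proof (induction n)
  case (Suc n)
  then show ?case
    using Vector_Spaces.linear_compose[OF Suc assms] by (simp add: comp_def)
qed (simp add: linear_ident)

end

context finite_dimensional_vector_space
begin

lemma span_Int_span_disjoint:
  assumes X: "independent X" and "B \<subseteq> X" "D \<subseteq> X" "B \<inter> D = {}"
  shows "span B \<inter> span D = {0}"
proof -
  have indep: "independent B" "independent D" "independent (B \<union> D)"
    using X assms(2,3) independent_mono by auto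
  have fin: "finite B" "finite D"
    using indep finiteI_independent by auto
  have "dim (span (B \<union> D)) + dim (span B \<inter> span D) = dim (span B) + dim (span D)"
    using dim_sums_Int[of "span B" "span D"] by (simp add: span_Un)
  also have "\<dots> = dim (span (B \<union> D))"
    using indep fin \<open>B \<inter> D = {}\<close> by (simp add: dim_eq_card_independent card_Un_disjoint)
  finally have "dim (span B \<inter> span D) = 0" by simp
  then show ?thesis using span_zero by auto
qed

lemma linear_image_span_Diff_kernel:
  assumes f: "Vector_Spaces.linear scale scale f" and B: "\<And>x. x \<in> B \<Longrightarrow> f x = 0"
  shows "f ` span C = f ` span (C - B)"
proof -
  have "span (f ` C) = span (f ` (C - B))"
  proof (rule span_eq[THEN iffD2], intro conjI subsetI)
    fix y assume "y \<in> f ` C"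
    then obtain c where "c \<in> C" "y = f c" by blast
    then show "y \<in> span (f ` (C - B))"
      using B span_zero by (cases "c \<in> B") (auto intro: span_base)
  qed (auto intro: span_base)
  then show ?thesis
    by (simp add: endo.linear_span_image[OF f, symmetric])
qed

lemma dim_kernel_add_dim_image:
  assumes S: "subspace S" and f: "Vector_Spaces.linear scale scale f"
  shows "dim {x \<in> S. f x = 0} + dim (f ` S) = dim S"
proof -
  let ?K = "{x \<in> S. f x = 0}"
  obtain B where B: "B \<subseteq> ?K" "independent B" "?K \<subseteq> span B" "card B = dim ?K"
    using basis_exists by blast
  obtain C where C: "B \<subseteq> C" "C \<subseteq> S" "independent C" "S \<subseteq> span C"
    using maximal_independent_subset_extend[of B S] B by auto
  have "finite C" "S = span C"
    using C finiteI_independent span_minimal[OF C(2) S] by blast+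
  have inj: "inj_on f (span (C - B))"
  proof (rule endo.linear_inj_on_iff_eq_0[OF f subspace_span, THEN iffD2], intro ballI impI)
    fix x assume x: "x \<in> span (C - B)" and "f x = 0"
    then have "x \<in> span B"
      using B(3) \<open>S = span C\<close> span_mono[of "C - B" C] by blast
    then show "x = 0"
      using x span_Int_span_disjoint[OF C(3) C(1), of "C - B"] by blast
  qed
  have "f ` S = span (f ` (C - B))"
    using linear_image_span_Diff_kernel[OF f, of B C] B(1) \<open>S = span C\<close>
    by (auto simp: endo.linear_span_image[OF f])
  then have "dim (f ` S) = card (f ` (C - B))"
    using inj C(3) independent_mono[of C "C - B"]
      endo.linear_independent_injective_image[OF f, of "C - B"]
    by (simp add: dim_eq_card_independent)
  also have "\<dots> = card (C - B)"
    using card_image[OF inj_on_subset[OF inj span_superset]] .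
  finally show ?thesis
    using B(4) C \<open>finite C\<close> basis_card_eq_dim[OF C(2) C(4) C(3)] card_mono[of C B]
    by (simp add: card_Diff_subset finite_subset)
qed

lemma dim_span_UN_eq_sum:
  assumes "finite I" and X: "independent X"
    and \<beta>: "\<And>i. i \<in> I \<Longrightarrow> \<beta> i \<subseteq> X"
    and disj: "\<And>i j. i \<in> I \<Longrightarrow> j \<in> I \<Longrightarrow> i \<noteq> j \<Longrightarrow> \<beta> i \<inter> \<beta> j = {}"
    and W: "\<And>i. i \<in> I \<Longrightarrow> subspace (W i)" "\<And>i. i \<in> I \<Longrightarrow> W i \<subseteq> span (\<beta> i)"
  shows "dim (span (\<Union>i\<in>I. W i)) = (\<Sum>i\<in>I. dim (W i))"
  using assms(1,3-)
proof (induction I rule: finite_induct)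
  case empty
  then show ?case by simp
next
  case (insert i I)
  let ?T = "span (\<Union>j\<in>I. W j)"
  have Wi: "subspace (W i)" "W i \<subseteq> span (\<beta> i)" "span (W i) = W i"
    using insert.prems by auto
  have "?T \<subseteq> span (\<Union>j\<in>I. \<beta> j)"
    using insert.prems(4) span_mono[of _ "\<Union>j\<in>I. \<beta> j"]
    by (intro span_minimal subspace_span UN_least) blast
  moreover have "span (\<beta> i) \<inter> span (\<Union>j\<in>I. \<beta> j) = {0}"
    using insert by (intro span_Int_span_disjoint[OF X]) blast+
  ultimately have "dim (W i \<inter> ?T) = 0"
    using Wi(2) by auto
  moreover have "span (\<Union>j\<in>insert i I. W j) = {x + y |x y. x \<in> W i \<and> y \<in> ?T}"
    using Wi(3) by (simp only: UN_insert span_Un)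
  ultimately have "dim (span (\<Union>j\<in>insert i I. W j)) = dim (W i) + dim ?T"
    using dim_sums_Int[OF Wi(1) subspace_span, of "\<Union>j\<in>I. W j"] by (simp del: dim_eq_0)
  with insert show ?case by simp
qed

lemma eigenspace_eq_span_eigenbasis:
  assumes f: "Vector_Spaces.linear scale scale f"
    and eigen: "\<And>v. v \<in> Basis \<Longrightarrow> f v = \<mu> v *s v"
  shows "{x. f x = c *s x} = span {v \<in> Basis. \<mu> v = c}"
proof
  have "subspace {x. f x = c *s x}"
    by (auto simp: subspace_def endo.linear_0[OF f] endo.linear_add[OF f] endo.linear_scale[OF f]
        scale_right_distrib)
  then show "span {v \<in> Basis. \<mu> v = c} \<subseteq> {x. f x = c *s x}"
    by (rule span_minimal[rotated]) (auto simp: eigen)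
next
  show "{x. f x = c *s x} \<subseteq> span {v \<in> Basis. \<mu> v = c}"
  proof
    fix x assume fx: "x \<in> {x. f x = c *s x}"
    obtain u where x: "x = (\<Sum>v\<in>Basis. u v *s v)"
      using span_finite[OF finite_Basis] span_Basis by blast
    have "(\<Sum>v\<in>Basis. (u v * (\<mu> v - c)) *s v) = f x - c *s x"
      by (simp add: x endo.linear_sum[OF f] endo.linear_scale[OF f] eigen scale_sum_right
          algebra_simps sum_subtractf[symmetric] scale_left_diff_distrib)
    also have "\<dots> = 0"
      using fx by simp
    finally have "\<forall>v\<in>Basis. u v * (\<mu> v - c) = 0"
      using independent_explicit[THEN iffD1, OF independent_Basis, THEN conjunct2, rule_format,
          of "\<lambda>v. u v * (\<mu> v - c)"] by blast
    then show "x \<in> span {v \<in> Basis. \<mu> v = c}"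
      unfolding x
    proof (intro span_sum)
      fix v assume "v \<in> Basis"
      then show "u v *s v \<in> span {v \<in> Basis. \<mu> v = c}"
        using \<open>\<forall>v\<in>Basis. u v * (\<mu> v - c) = 0\<close>[rule_format, OF \<open>v \<in> Basis\<close>]
        by (auto intro: span_scale span_base span_zero)
    qed
  qed
qed

end

locale sl2_weight_module = vector_space scale
  for scale :: "'a::field_char_0 \<Rightarrow> 'b::ab_group_add \<Rightarrow> 'b" (infixr \<open>*s\<close> 75) +
  fixes E F :: "'b \<Rightarrow> 'b" and V :: "int \<Rightarrow> 'b set"
  assumes linear_E: "Vector_Spaces.linear scale scale E"
    and linear_F: "Vector_Spaces.linear scale scale F"
    and E_weight: "x \<in> V t \<Longrightarrow> E x \<in> V (t + 2)"
    and F_weight: "x \<in> V t \<Longrightarrow> F x \<in> V (t - 2)"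
    and commutator: "x \<in> V t \<Longrightarrow> E (F x) - F (E x) = of_int t *s x"
    and weights_bounded_below: "\<exists>t\<^sub>0. \<forall>t<t\<^sub>0. V t \<subseteq> {0}"
begin

lemma E_pow_weight: "x \<in> V t \<Longrightarrow> (E ^^ k) x \<in> V (t + 2 * int k)"
  by (induction k) (auto dest: E_weight simp: algebra_simps)

lemma E_pow_F:
  assumes x: "x \<in> V t"
  shows "(E ^^ Suc k) (F x) = F ((E ^^ Suc k) x) + of_int ((int k + 1) * (t + int k)) *s (E ^^ k) x"
proof (induction k)
  case 0
  then show ?case
    using commutator[OF x] by (simp add: algebra_simps)
next
  case (Suc k)
  define y where "y = (E ^^ Suc k) x"
  have "(E ^^ Suc (Suc k)) (F x) = E (F y) + of_int ((int k + 1) * (t + int k)) *s y"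
    using Suc by (simp add: y_def endo.linear_add[OF linear_E] endo.linear_scale[OF linear_E])
  also have "E (F y) = F (E y) + of_int (t + 2 * int (Suc k)) *s y"
    using commutator[OF E_pow_weight[OF x, of "Suc k"]] by (simp add: y_def algebra_simps)
  also have "F (E y) + of_int (t + 2 * int (Suc k)) *s y + of_int ((int k + 1) * (t + int k)) *s y
      = F (E y) + of_int ((int (Suc k) + 1) * (t + int (Suc k))) *s y"
    by (simp only: add.assoc scale_left_distrib[symmetric]) (simp add: algebra_simps)
  finally show ?case
    by (simp add: y_def)
qed

lemma lowest_weight_E_pow_eq_0:
  assumes x: "x \<in> V t" and "F x = 0"
  shows "(E ^^ k) x = 0 \<Longrightarrow> t + int k \<le> 0 \<Longrightarrow> x = 0"
proof (induction k)
  case (Suc k)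
  \<comment> \<open>\<open>E\<^sup>k\<^sup>+\<^sup>1 (F x) = 0\<close> leaves \<open>(k + 1)(t + k) E\<^sup>k x = 0\<close>, and \<open>t + k < 0\<close>\<close>
  have "of_int ((int k + 1) * (t + int k)) *s (E ^^ k) x = 0"
    using E_pow_F[OF x, of k] Suc.prems(1) \<open>F x = 0\<close>
    by (simp add: endo.linear_0[OF linear_E] endo.linear_0[OF linear_F]
        endo.linear_0[OF linear_funpow[OF linear_E]])
  moreover have "(of_int ((int k + 1) * (t + int k)) :: 'a) \<noteq> 0"
    using Suc.prems(2) by (simp only: of_int_eq_0_iff) simp
  ultimately have "(E ^^ k) x = 0"
    using scale_eq_0_iff by blast
  then show ?case
    using Suc by simp
qed simp

lemma E_pow_inj:
  assumes "x \<in> V t" "(E ^^ k) x = 0" "t + int k \<le> 0"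
  shows "x = 0"
proof -
  obtain t\<^sub>0 where bot: "\<And>t. t < t\<^sub>0 \<Longrightarrow> V t \<subseteq> {0}"
    using weights_bounded_below by blast
  show ?thesis
    using assms
  proof (induction "nat (t - t\<^sub>0)" arbitrary: t k x rule: less_induct)
    case less
    \<comment> \<open>\<open>F x\<close> has lower weight and is killed by one more power of \<open>E\<close>\<close>
    have "(E ^^ Suc k) (F x) = 0"
      using E_pow_F[OF less.prems(1), of k] less.prems(2)
      by (simp add: endo.linear_0[OF linear_E] endo.linear_0[OF linear_F])
    have "F x = 0"
    proof (cases "t - 2 < t\<^sub>0")
      case True
      then show ?thesis
        using bot F_weight[OF less.prems(1)] by blast
    next
      case False
      then show ?thesis
        using less.hyps[of "t - 2" "F x" "Suc k"] F_weight[OF less.prems(1)] less.prems(3)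
          \<open>(E ^^ Suc k) (F x) = 0\<close>
        by simp
    qed
    then show ?case
      using lowest_weight_E_pow_eq_0 less.prems by blast
  qed
qed

end

lemma card_filter_disj:
  assumes "finite A" "\<And>x. x \<in> A \<Longrightarrow> \<not> (P x \<and> Q x)"
  shows "card {x \<in> A. P x \<or> Q x} = card {x \<in> A. P x} + card {x \<in> A. Q x}"
proof -
  have "{x \<in> A. P x \<or> Q x} = {x \<in> A. P x} \<union> {x \<in> A. Q x}"
    by blast
  then show ?thesis
    using assms by (simp add: card_Un_disjoint disjoint_iff)
qed

definition ksubsets :: "nat \<Rightarrow> nat \<Rightarrow> nat set set" where
  "ksubsets n k = {S. S \<subseteq> {1..n} \<and> card S = k}"

definition gauss_poly :: "nat \<Rightarrow> nat \<Rightarrow> int poly" where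
  "gauss_poly n k = (\<Sum>S\<in>ksubsets n k. monom 1 (\<Sum>S - \<Sum>{1..k}))"

lemma ksubsets_subset_Pow: "ksubsets n k \<subseteq> Pow {1..n}"
  by (auto simp: ksubsets_def)

lemma finite_ksubsets [simp]: "finite (ksubsets n k)"
  using finite_subset[OF ksubsets_subset_Pow] by blast

lemma ksubsets_finite: "S \<in> ksubsets n k \<Longrightarrow> finite S"
  unfolding ksubsets_def using finite_subset by blast

lemma ksubsets_0 [simp]: "ksubsets n 0 = {{}}"
  unfolding ksubsets_def using finite_subset by fastforce

lemma ksubsets_eq_empty: "n < k \<Longrightarrow> ksubsets n k = {}"
  unfolding ksubsets_def by (auto dest!: card_mono[OF finite_atLeastAtMost])

lemma ksubsets_Suc_Suc:
  "ksubsets (Suc n) (Suc k) = ksubsets n (Suc k) \<union> insert (Suc n) ` ksubsets n k"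
proof (intro equalityI subsetI)
  fix S assume S: "S \<in> ksubsets (Suc n) (Suc k)"
  then have "finite S" by (rule ksubsets_finite)
  show "S \<in> ksubsets n (Suc k) \<union> insert (Suc n) ` ksubsets n k"
  proof (cases "Suc n \<in> S")
    case True
    then have "S = insert (Suc n) (S - {Suc n})" "S - {Suc n} \<in> ksubsets n k"
      using S \<open>finite S\<close> by (auto simp: ksubsets_def le_Suc_eq)
    then show ?thesis by blast
  next
    case False
    then show ?thesis
      using S by (auto simp: ksubsets_def le_Suc_eq)
  qed
next
  fix S assume "S \<in> ksubsets n (Suc k) \<union> insert (Suc n) ` ksubsets n k"
  then show "S \<in> ksubsets (Suc n) (Suc k)"
  proof
    assume "S \<in> insert (Suc n) ` ksubsets n k"
    then obtain T where T: "T \<in> ksubsets n k" "S = insert (Suc n) T"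
      by blast
    moreover have "Suc n \<notin> T"
      using T by (auto simp: ksubsets_def)
    ultimately show ?thesis
      using ksubsets_finite[OF T(1)] by (auto simp: ksubsets_def)
  qed (auto simp: ksubsets_def)
qed

lemma sum_atLeastAtMost_card_le:
  fixes S :: "nat set"
  assumes "finite S" "0 \<notin> S"
  shows "\<Sum>{1..card S} \<le> \<Sum>S"
  using assms
proof (induction S rule: finite_linorder_max_induct)
  case (insert b A)
  have "A \<subseteq> {1..<b}"
    using insert by (auto simp: Suc_le_eq intro!: gr0I)
  then have "card A < b"
    using card_mono[of "{1..<b}" A] insert.prems by fastforce
  moreover have "b \<notin> A"
    using insert by blast
  ultimately show ?case
    using insert by (simp add: sum.cl_ivl_Suc)
qed simp

lemma ksubsets_sum_ge:
  assumes "S \<in> ksubsets n k"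
  shows "\<Sum>{1..k} \<le> \<Sum>S"
proof -
  have "0 \<notin> S" "card S = k"
    using assms by (auto simp: ksubsets_def)
  then show ?thesis
    using sum_atLeastAtMost_card_le[OF ksubsets_finite[OF assms]] by simp
qed

lemma gauss_poly_0 [simp]: "gauss_poly n 0 = 1"
  by (simp add: gauss_poly_def)

lemma gauss_poly_eq_0: "n < k \<Longrightarrow> gauss_poly n k = 0"
  by (simp add: gauss_poly_def ksubsets_eq_empty)

lemma gauss_poly_Suc_Suc:
  "gauss_poly (Suc n) (Suc k) = gauss_poly n (Suc k) + monom 1 (n - k) * gauss_poly n k"
proof -
  have inj: "inj_on (insert (Suc n)) (ksubsets n k)"
  proof (rule inj_onI)
    fix S T assume "S \<in> ksubsets n k" "T \<in> ksubsets n k" "insert (Suc n) S = insert (Suc n) T"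
    moreover have "Suc n \<notin> S" "Suc n \<notin> T"
      using calculation by (auto simp: ksubsets_def)
    ultimately show "S = T"
      by (simp add: insert_ident)
  qed
  have "\<Sum>(insert (Suc n) S) - \<Sum>{1..Suc k} = (n - k) + (\<Sum>S - \<Sum>{1..k})"
    if "S \<in> ksubsets n k" for S
  proof -
    have "Suc n \<notin> S" "k \<le> n"
      using that card_mono[of "{1..n}" S] by (auto simp: ksubsets_def)
    then show ?thesis
      using ksubsets_sum_ge[OF that] ksubsets_finite[OF that] by simp
  qed
  then have "(\<Sum>S\<in>insert (Suc n) ` ksubsets n k. monom (1::int) (\<Sum>S - \<Sum>{1..Suc k}))
      = monom 1 (n - k) * gauss_poly n k"
    by (simp add: sum.reindex[OF inj] gauss_poly_def sum_distrib_left mult_monom)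
  moreover have "ksubsets n (Suc k) \<inter> insert (Suc n) ` ksubsets n k = {}"
    by (auto simp: ksubsets_def)
  ultimately show ?thesis
    unfolding gauss_poly_def[of "Suc n"] ksubsets_Suc_Suc
    by (simp add: sum.union_disjoint gauss_poly_def)
qed

lemma qint_add: "qint (a + b) = qint a + monom 1 a * qint b"
  by (induction b) (simp_all add: qint_def mult_monom algebra_simps)

lemma qfact_0 [simp]: "qfact 0 = 1"
  by (simp add: qfact_def)

lemma qfact_Suc: "qfact (Suc n) = qfact n * qint (Suc n)"
  unfolding qfact_def by (simp add: prod.nat_ivl_Suc')

lemma qfact_nonzero: "qfact n \<noteq> 0"
proof -
  have "qint i \<noteq> 0" if "0 < i" for i
  proof -
    have "coeff (qint i) 0 = 1"
      using that by (simp add: qint_def coeff_sum coeff_monom)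
    then show ?thesis by auto
  qed
  then show ?thesis
    unfolding qfact_def by (auto simp: prod_zero_iff)
qed

lemma gauss_poly_mult_qfact:
  "k \<le> n \<Longrightarrow> gauss_poly n k * (qfact k * qfact (n - k)) = qfact n"
proof (induction n arbitrary: k)
  case (Suc n)
  show ?case
  proof (cases k)
    case (Suc j)
    have IH1: "gauss_poly n (Suc j) * (qfact (Suc j) * qfact (n - j)) = qfact n * qint (n - j)"
    proof (cases "Suc j \<le> n")
      case True
      then have "qfact (n - j) = qfact (n - Suc j) * qint (n - j)"
        using qfact_Suc[of "n - Suc j"] by (simp add: Suc_diff_Suc)
      then show ?thesis
        using Suc.IH[OF True] by (simp add: algebra_simps)
    qed (use Suc.prems \<open>k = Suc j\<close> in \<open>simp add: gauss_poly_eq_0 qint_def\<close>)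
    have IH2: "gauss_poly n j * (qfact j * qfact (n - j)) = qfact n"
      using Suc.IH[of j] Suc.prems \<open>k = Suc j\<close> by simp
    have "qint (n - j) + monom 1 (n - j) * qint (Suc j) = qint (Suc n)"
      using qint_add[of "n - j" "Suc j"] Suc.prems \<open>k = Suc j\<close> by simp
    have "gauss_poly (Suc n) k * (qfact k * qfact (Suc n - k))
        = gauss_poly n (Suc j) * (qfact (Suc j) * qfact (n - j))
          + monom 1 (n - j) * qint (Suc j) * (gauss_poly n j * (qfact j * qfact (n - j)))"
      by (simp add: \<open>k = Suc j\<close> gauss_poly_Suc_Suc qfact_Suc algebra_simps)
    also have "\<dots> = qfact n * (qint (n - j) + monom 1 (n - j) * qint (Suc j))"
      using IH1 IH2 by (simp add: algebra_simps)
    finally show ?thesis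
      using \<open>qint (n - j) + monom 1 (n - j) * qint (Suc j) = qint (Suc n)\<close> by (simp add: qfact_Suc)
  qed simp
qed simp

lemma qbinom_eq_gauss_poly: "k \<le> n \<Longrightarrow> qbinom n k = gauss_poly n k"
  unfolding qbinom_def using gauss_poly_mult_qfact qfact_nonzero
  by (metis mult_eq_0_iff nonzero_mult_div_cancel_right)

lemma coeff_qbinom:
  assumes "k \<le> n"
  shows "coeff (qbinom n k) j = int (card {S \<in> ksubsets n k. \<Sum>S = j + \<Sum>{1..k}})"
proof -
  have "coeff (qbinom n k) j = (\<Sum>S\<in>ksubsets n k. if \<Sum>S = j + \<Sum>{1..k} then 1 else 0)"
    unfolding qbinom_eq_gauss_poly[OF assms] gauss_poly_def coeff_sum coeff_monom
    by (rule sum.cong) (use ksubsets_sum_ge in auto)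
  also have "\<dots> = int (card (ksubsets n k \<inter> {S. \<Sum>S = j + \<Sum>{1..k}}))"
    by (simp add: sum.If_cases)
  finally show ?thesis
    by (simp add: Int_def conj_commute)
qed

lemma coeff_qbinom_excess:
  assumes "k \<le> n"
  shows "int (card {S \<in> ksubsets n k. int (\<Sum>S) - int (\<Sum>{1..k}) = e})
    = (if e < 0 then 0 else coeff (qbinom n k) (nat e))"
proof (cases "e < 0")
  case True
  have "0 \<le> int (\<Sum>S) - int (\<Sum>{1..k})" if "S \<in> ksubsets n k" for S
    using ksubsets_sum_ge[OF that] by (simp del: of_nat_sum)
  with True have "{S \<in> ksubsets n k. int (\<Sum>S) - int (\<Sum>{1..k}) = e} = {}"
    by force
  with True show ?thesis
    by simp
next
  case False
  then have "{S \<in> ksubsets n k. int (\<Sum>S) - int (\<Sum>{1..k}) = e}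
      = {S \<in> ksubsets n k. \<Sum>S = nat e + \<Sum>{1..k}}"
    by (auto simp del: of_nat_sum)
  with False show ?thesis
    by (simp add: coeff_qbinom[OF assms])
qed

definition weight :: "nat \<Rightarrow> nat set \<Rightarrow> int" where
  "weight l S = 2 * int (\<Sum>S) - int (card S) * (int l + 1)"

lemma weight_by_parts:
  assumes S: "S \<subseteq> {1..l}"
  shows "(\<Sum>k\<in>{1..<l}. int (k * (l - k)) * (of_bool (Suc k \<in> S) - of_bool (k \<in> S))) = weight l S"
proof -
  define c where "c k = int k * (int l - int k)" for k
  have delta: "(\<Sum>k\<in>{1..<l}. c k * of_bool (k = j)) = c j" if "j \<le> l" for j
  proof -
    have "(\<Sum>k\<in>{1..<l}. c k * of_bool (k = j)) = (\<Sum>k\<in>{1..<l}. if k = j then c k else 0)"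
      by (rule sum.cong) auto
    also have "\<dots> = c j"
      using that by (auto simp: c_def)
    finally show ?thesis .
  qed
  have inner: "(\<Sum>k\<in>{1..<l}. c k * (of_bool (Suc k = i) - of_bool (k = i))) = 2 * int i - (int l + 1)"
    if "i \<in> S" for i
  proof -
    have "1 \<le> i" "i \<le> l"
      using S that by auto
    moreover have "(Suc k = i) = (k = i - 1)" for k
      using \<open>1 \<le> i\<close> by auto
    ultimately have "(\<Sum>k\<in>{1..<l}. c k * (of_bool (Suc k = i) - of_bool (k = i))) = c (i - 1) - c i"
      using delta[of "i - 1"] delta[of i] by (simp only: right_diff_distrib sum_subtractf)
    also have "\<dots> = 2 * int i - (int l + 1)"
      using \<open>1 \<le> i\<close> by (simp add: c_def of_nat_diff algebra_simps)
    finally show ?thesis .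
  qed
  have "of_bool (j \<in> S) = (\<Sum>i\<in>S. of_bool (j = i) :: int)" for j
    using finite_subset[OF S] by (simp add: of_bool_def sum.delta)
  then have "(\<Sum>k\<in>{1..<l}. int (k * (l - k)) * (of_bool (Suc k \<in> S) - of_bool (k \<in> S)))
      = (\<Sum>k\<in>{1..<l}. \<Sum>i\<in>S. c k * (of_bool (Suc k = i) - of_bool (k = i)))"
    by (intro sum.cong) (simp_all add: c_def of_nat_diff sum_distrib_left sum_subtractf[symmetric])
  also have "\<dots> = (\<Sum>i\<in>S. 2 * int i - (int l + 1))"
    using inner by (subst sum.swap) simp
  also have "\<dots> = weight l S"
    by (simp add: weight_def sum_subtractf of_nat_sum sum_distrib_left)
  finally show ?thesis .
qed

lemma weight_ge: "S \<in> ksubsets l m \<Longrightarrow> - (int m * (int l + 1)) \<le> weight l S"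
  by (simp add: weight_def ksubsets_def sum_nonneg)

lemma ksubsets_hop:
  assumes "S \<in> ksubsets l m" "i \<in> S" "j \<notin> S" "j \<in> {1..l}"
  shows "insert j (S - {i}) \<in> ksubsets l m \<and>
    weight l (insert j (S - {i})) = weight l S + 2 * (int j - int i)"
proof -
  have "finite S"
    using assms(1) by (rule ksubsets_finite)
  moreover have "0 < card S"
    using calculation assms(2) card_gt_0_iff by blast
  ultimately have "int (\<Sum>(insert j (S - {i}))) = int (\<Sum>S) + int j - int i"
    "card (insert j (S - {i})) = card S"
    using assms(2,3) by (simp_all add: sum.remove[of S i] card_Suc_Diff1)
  moreover have "insert j (S - {i}) \<subseteq> {1..l}"
    using assms by (auto simp: ksubsets_def)
  ultimately show ?thesis
    using assms(1) by (simp add: ksubsets_def weight_def algebra_simps)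
qed

lemma weight_eq_iff_excess:
  assumes "S \<in> ksubsets l m"
  shows "(weight l S = - int d \<or> weight l S = - int d - 1)
    \<longleftrightarrow> int (\<Sum>S) - int (\<Sum>{1..m}) = (int m * (int l - int m) - int d) div 2"
proof -
  have key: "2 * T = s + m \<Longrightarrow>
      (2 * X - (a + m) = - d \<or> 2 * X - (a + m) = - d - 1) \<longleftrightarrow> X - T = (a - s - d) div 2"
    for X T a s m d :: int
    by presburger
  have "2 * int (\<Sum>{1..m}) = int m * int m + int m"
    using double_gauss_sum_from_Suc_0[of m, where 'a = int] by (simp add: of_nat_sum algebra_simps)
  moreover have "weight l S = 2 * int (\<Sum>S) - (int m * int l + int m)"
    using assms by (simp add: weight_def ksubsets_def algebra_simps del: of_nat_sum)
  ultimately show ?thesis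
    using key[of "int (\<Sum>{1..m})" "int m * int m" "int m" "int (\<Sum>S)" "int m * int l" "int d"]
    by (simp add: right_diff_distrib del: of_nat_sum)
qed

definition reflect :: "nat \<Rightarrow> nat set \<Rightarrow> nat set" where
  "reflect l S = (\<lambda>i. Suc l - i) ` S"

lemma reflect_reflect:
  assumes "S \<subseteq> {1..l}"
  shows "reflect l (reflect l S) = S"
proof -
  have "(\<lambda>i. Suc l - (Suc l - i)) ` S = id ` S"
    using assms by (intro image_cong) auto
  then show ?thesis
    by (simp add: reflect_def image_image)
qed

lemma inj_on_reflect: "S \<subseteq> {1..l} \<Longrightarrow> inj_on (\<lambda>i. Suc l - i) S"
  by (auto simp: inj_on_def subset_iff)

lemma reflect_ksubsets: "S \<in> ksubsets l m \<Longrightarrow> reflect l S \<in> ksubsets l m"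
  unfolding ksubsets_def reflect_def by (auto simp: card_image inj_on_reflect subset_iff)

lemma weight_reflect:
  assumes "S \<subseteq> {1..l}"
  shows "weight l (reflect l S) = - weight l S"
proof -
  note inj = inj_on_reflect[OF assms]
  have "int (\<Sum>(reflect l S)) = (\<Sum>i\<in>S. int l + 1 - int i)"
    using assms by (auto simp: reflect_def sum.reindex[OF inj] of_nat_sum of_nat_diff intro!: sum.cong)
  then show ?thesis
    using card_image[OF inj] by (simp add: weight_def reflect_def sum_subtractf of_nat_sum)
qed

lemma card_ksubsets_weight_uminus:
  "card {S \<in> ksubsets l m. P (- weight l S)} = card {S \<in> ksubsets l m. P (weight l S)}"
proof -
  have *: "reflect l S \<in> ksubsets l m \<and> weight l (reflect l S) = - weight l S"
    if "S \<in> ksubsets l m" for S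
    using that reflect_ksubsets weight_reflect by (simp add: ksubsets_def)
  show ?thesis
  proof (rule bij_betw_same_card[OF bij_betw_byWitness[where f' = "reflect l"]])
  show "\<forall>S\<in>{S \<in> ksubsets l m. P (- weight l S)}. reflect l (reflect l S) = S"
    "\<forall>S\<in>{S \<in> ksubsets l m. P (weight l S)}. reflect l (reflect l S) = S"
    by (auto simp: ksubsets_def reflect_reflect)
  show "reflect l ` {S \<in> ksubsets l m. P (- weight l S)} \<subseteq> {S \<in> ksubsets l m. P (weight l S)}"
    "reflect l ` {S \<in> ksubsets l m. P (weight l S)} \<subseteq> {S \<in> ksubsets l m. P (- weight l S)}"
    using * by (auto simp del: mem_Collect_eq simp: image_subset_iff)
  qed
qed

definition fermion_sign :: "nat \<Rightarrow> nat set \<Rightarrow> complex" where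
  "fermion_sign k S = (-1) ^ card {i \<in> S. i < k}"

lemma fermion_sign_mult_self [simp]: "fermion_sign k S * fermion_sign k S = 1"
  by (simp add: fermion_sign_def power_mult_distrib[symmetric])

lemma fermion_sign_insert_less:
  "finite S \<Longrightarrow> a \<notin> S \<Longrightarrow> a < k \<Longrightarrow> fermion_sign k (insert a S) = - fermion_sign k S"
proof -
  assume "finite S" "a \<notin> S" "a < k"
  then have "{i \<in> insert a S. i < k} = insert a {i \<in> S. i < k}" "a \<notin> {i \<in> S. i < k}"
    by auto
  then show ?thesis
    using \<open>finite S\<close> by (simp add: fermion_sign_def)
qed

lemma fermion_sign_eq_1: "\<forall>i\<in>S. k \<le> i \<Longrightarrow> fermion_sign k S = 1"
  unfolding fermion_sign_def by (metis (no_types, lifting) empty_Collect_eq card.empty leD power_0)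

locale fock_space = finite_dimensional_vector_space scale "fock_vec b' r ` Pow {1..l}"
  for scale :: "complex \<Rightarrow> 'v::ab_group_add \<Rightarrow> 'v" (infixr \<open>*s\<close> 75)
    and b b' :: "nat \<Rightarrow> 'v \<Rightarrow> 'v" and r :: 'v and l :: nat +
  assumes linear_b: "\<And>k. k \<in> {1..l} \<Longrightarrow> Vector_Spaces.linear scale scale (b k)"
    and linear_b': "\<And>k. k \<in> {1..l} \<Longrightarrow> Vector_Spaces.linear scale scale (b' k)"
    and anticomm_b_b: "\<And>j k \<psi>. j \<in> {1..l} \<Longrightarrow> k \<in> {1..l} \<Longrightarrow> b j (b k \<psi>) + b k (b j \<psi>) = 0"
    and anticomm_b'_b': "\<And>j k \<psi>. j \<in> {1..l} \<Longrightarrow> k \<in> {1..l} \<Longrightarrow> b' j (b' k \<psi>) + b' k (b' j \<psi>) = 0"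
    and anticomm_b_b': "\<And>j k \<psi>. j \<in> {1..l} \<Longrightarrow> k \<in> {1..l} \<Longrightarrow>
                    b j (b' k \<psi>) + b' k (b j \<psi>) = (if j = k then \<psi> else 0)"
    and vacuum: "\<And>k. k \<in> {1..l} \<Longrightarrow> b k r = 0"
    and fock_vec_inj: "inj_on (fock_vec b' r) (Pow {1..l})"
begin

lemmas b_linear_simps =
  endo.linear_0[OF linear_b] endo.linear_add[OF linear_b] endo.linear_diff[OF linear_b]
  endo.linear_neg[OF linear_b] endo.linear_scale[OF linear_b] endo.linear_sum[OF linear_b]
  endo.linear_0[OF linear_b'] endo.linear_add[OF linear_b'] endo.linear_diff[OF linear_b']
  endo.linear_neg[OF linear_b'] endo.linear_scale[OF linear_b'] endo.linear_sum[OF linear_b']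

abbreviation ket :: "nat set \<Rightarrow> 'v" where
  "ket \<equiv> fock_vec b' r"

lemma ket_empty: "ket {} = r"
  by (simp add: fock_vec_def)

lemma ket_insert_min: "finite S \<Longrightarrow> \<forall>i\<in>S. a < i \<Longrightarrow> ket (insert a S) = b' a (ket S)"
proof -
  assume "finite S" "\<forall>i\<in>S. a < i"
  moreover have "Min (insert a S) = a" "insert a S - {a} = S"
    using calculation by (auto intro: Min_eqI less_imp_le)
  ultimately have "sorted_list_of_set (insert a S) = a # sorted_list_of_set S"
    by (simp add: sorted_list_of_set_nonempty)
  then show ?thesis
    by (simp add: fock_vec_def)
qed

lemma b'_b'_self: "k \<in> {1..l} \<Longrightarrow> b' k (b' k \<psi>) = 0"
proof -
  assume "k \<in> {1..l}"
  then have "(2::complex) *s b' k (b' k \<psi>) = 0"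
    using anticomm_b'_b'[of k k \<psi>] by (simp add: scale_left_distrib[of 1 1, simplified])
  then show ?thesis by simp
qed

lemma b'_ket:
  assumes "S \<subseteq> {1..l}" "k \<in> {1..l}"
  shows "b' k (ket S) = (if k \<in> S then 0 else fermion_sign k S *s ket (insert k S))"
  using finite_subset[OF assms(1) finite_atLeastAtMost] assms
proof (induction S arbitrary: k rule: finite_linorder_min_induct)
  case empty
  then show ?case
    using ket_insert_min[of "{}" k] by (simp add: fermion_sign_def)
next
  case (insert a T)
  have a: "a \<in> {1..l}" "a \<notin> T" and T: "T \<subseteq> {1..l}"
    using insert by auto
  have ket_aT: "ket (insert a T) = b' a (ket T)"
    using insert ket_insert_min by blast
  consider "k < a" | "k = a" | "a < k"
    by linarith
  then show ?case
  proof cases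
    case 1
    then have "ket (insert k (insert a T)) = b' k (ket (insert a T))"
      using insert.hyps by (intro ket_insert_min) auto
    moreover have "fermion_sign k (insert a T) = 1" "k \<notin> insert a T"
      using 1 insert.hyps by (force intro: fermion_sign_eq_1)+
    ultimately show ?thesis
      by simp
  next
    case 2
    then show ?thesis
      using ket_aT b'_b'_self[OF a(1)] by simp
  next
    case 3
    have "b' k (ket (insert a T)) = - b' a (b' k (ket T))"
      using ket_aT anticomm_b'_b'[OF insert.prems(2) a(1)] by (simp add: eq_neg_iff_add_eq_0)
    moreover have "b' a (ket (insert k T)) = ket (insert k (insert a T))"
      using insert.hyps 3 ket_insert_min[of "insert k T" a] by (simp add: insert_commute)
    ultimately show ?thesis
      using 3 a insert.IH[OF T insert.prems(2)] insert.hyps(1)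
      by (auto simp: fermion_sign_insert_less b_linear_simps)
  qed
qed

lemma b_ket:
  assumes "S \<subseteq> {1..l}" "k \<in> {1..l}"
  shows "b k (ket S) = (if k \<in> S then fermion_sign k S *s ket (S - {k}) else 0)"
  using finite_subset[OF assms(1) finite_atLeastAtMost] assms
proof (induction S arbitrary: k rule: finite_linorder_min_induct)
  case empty
  then show ?case
    by (simp add: ket_empty vacuum)
next
  case (insert a T)
  have a: "a \<in> {1..l}" "a \<notin> T" and T: "T \<subseteq> {1..l}"
    using insert by auto
  have ket_aT: "ket (insert a T) = b' a (ket T)"
    using insert ket_insert_min by blast
  have swap: "b k (ket (insert a T)) = (if k = a then ket T else 0) - b' a (b k (ket T))"
    unfolding ket_aT eq_diff_eq by (rule anticomm_b_b'[OF insert.prems(2) a(1)])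
  note IH = insert.IH[OF T insert.prems(2)]
  show ?case
  proof (cases "k = a")
    case True
    moreover have "fermion_sign a (insert a T) = 1"
      using insert.hyps by (intro fermion_sign_eq_1) auto
    ultimately show ?thesis
      using swap IH a by (simp add: b_linear_simps)
  next
    case False
    moreover have "b' a (ket (T - {k})) = ket (insert a T - {k})"
      using insert.hyps False ket_insert_min[of "T - {k}" a] by (simp add: insert_Diff_if)
    ultimately show ?thesis
      using swap IH a insert.hyps
      by (auto simp: fermion_sign_insert_less b_linear_simps)
  qed
qed

lemma b'_b_ket:
  assumes "S \<subseteq> {1..l}" "j \<in> {1..l}" "k \<in> {1..l}"
  shows "b' j (b k (ket S)) = (if k \<in> S \<and> j \<notin> S - {k}
    then (fermion_sign k S * fermion_sign j (S - {k})) *s ket (insert j (S - {k})) else 0)"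
  using assms b'_ket[of "S - {k}" j] by (simp add: b_ket b_linear_simps subset_iff)

lemma number_ket:
  assumes "S \<subseteq> {1..l}" "k \<in> {1..l}"
  shows "b' k (b k (ket S)) = (if k \<in> S then ket S else 0)"
proof -
  have "fermion_sign k (S - {k}) = fermion_sign k S"
    unfolding fermion_sign_def by (rule arg_cong[where f = "\<lambda>S. (-1) ^ card S"]) auto
  then show ?thesis
    using assms by (simp add: b'_b_ket insert_absorb)
qed

lemma hop_up_ket:
  assumes "S \<subseteq> {1..l}" "k \<in> {1..<l}"
  shows "b' (Suc k) (b k (ket S)) = (if k \<in> S \<and> Suc k \<notin> S then ket (insert (Suc k) (S - {k})) else 0)"
proof -
  have "fermion_sign (Suc k) (S - {k}) = fermion_sign k S"
    unfolding fermion_sign_def by (rule arg_cong[where f = "\<lambda>S. (-1) ^ card S"]) auto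
  then show ?thesis
    using assms by (simp add: b'_b_ket)
qed

lemma hop_down_ket:
  assumes "S \<subseteq> {1..l}" "k \<in> {1..<l}"
  shows "b' k (b (Suc k) (ket S)) = (if Suc k \<in> S \<and> k \<notin> S then ket (insert k (S - {Suc k})) else 0)"
proof -
  have "k \<notin> S \<Longrightarrow> fermion_sign k (S - {Suc k}) = fermion_sign (Suc k) S"
    unfolding fermion_sign_def by (rule arg_cong[where f = "\<lambda>S. (-1) ^ card S"]) (auto simp: less_Suc_eq)
  then show ?thesis
    using assms by (simp add: b'_b_ket)
qed

lemma linear_b'_b: "j \<in> {1..l} \<Longrightarrow> k \<in> {1..l} \<Longrightarrow> Vector_Spaces.linear scale scale (\<lambda>\<psi>. b' j (b k \<psi>))"
  using Vector_Spaces.linear_compose[OF linear_b linear_b'] by (simp add: comp_def)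

lemma Mop_eq: "Mop l b b' \<psi> = (\<Sum>k\<in>{1..<l}. b' (Suc k) (b k \<psi>))"
  unfolding Mop_def by (rule sum.cong) auto

lemma linear_Mop: "Vector_Spaces.linear scale scale (Mop l b b')"
  unfolding Mop_eq[abs_def] by (intro endo.linear_compose_sum ballI linear_b'_b) auto

lemma linear_Nop: "Vector_Spaces.linear scale scale (Nop l b b')"
  unfolding Nop_def[abs_def] by (intro endo.linear_compose_sum ballI linear_b'_b) auto

\<comment> \<open>The weights \<open>k (l - k)\<close> make \<open>Mop\<close>, \<open>lower\<close> and \<open>\<Sum>\<^sub>i (2 i - l - 1) b'\<^sub>i b\<^sub>i\<close> an
  \<open>sl\<^sub>2\<close>-triple (the principal \<open>sl\<^sub>2\<close> in \<open>gl\<^sub>l\<close>).\<close>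
definition lower :: "'v \<Rightarrow> 'v" where
  "lower \<psi> = (\<Sum>k\<in>{1..<l}. of_nat (k * (l - k)) *s b' k (b (Suc k) \<psi>))"

lemma linear_lower: "Vector_Spaces.linear scale scale lower"
  unfolding lower_def[abs_def]
  by (intro endo.linear_compose_sum ballI endo.linear_compose_scale_right linear_b'_b) auto

lemma commutator_hops:
  assumes i: "i \<in> {1..l}" and j: "j \<in> {1..l}" and p: "p \<in> {1..l}" and q: "q \<in> {1..l}"
  shows "b' i (b j (b' p (b q \<psi>))) - b' p (b q (b' i (b j \<psi>)))
    = (if j = p then b' i (b q \<psi>) else 0) - (if q = i then b' p (b j \<psi>) else 0)"
proof -
  have swap: "b k (b' n \<phi>) = (if k = n then \<phi> else 0) - b' n (b k \<phi>)"
    if "k \<in> {1..l}" "n \<in> {1..l}" for k n \<phi>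
    using anticomm_b_b'[OF that] by (simp add: eq_diff_eq)
  have "b' i (b' p (b j (b q \<psi>))) = - b' p (b' i (b j (b q \<psi>)))"
    using anticomm_b'_b'[OF i p] by (simp add: eq_neg_iff_add_eq_0)
  moreover have "b j (b q \<psi>) = - b q (b j \<psi>)"
    using anticomm_b_b[OF j q] by (simp add: eq_neg_iff_add_eq_0)
  ultimately have "b' i (b' p (b j (b q \<psi>))) = b' p (b' i (b q (b j \<psi>)))"
    using i p by (simp add: b_linear_simps)
  then show ?thesis
    using i j p q by (simp add: swap b_linear_simps)
qed

lemma Mop_lower_commutator:
  "Mop l b b' (lower \<psi>) - lower (Mop l b b' \<psi>)
    = (\<Sum>k\<in>{1..<l}. of_nat (k * (l - k)) *s (b' (Suc k) (b (Suc k) \<psi>) - b' k (b k \<psi>)))"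
proof -
  let ?c = "\<lambda>k. of_nat (k * (l - k)) :: complex"
  have "Mop l b b' (lower \<psi>) - lower (Mop l b b' \<psi>) = (\<Sum>i\<in>{1..<l}. \<Sum>k\<in>{1..<l}.
      ?c k *s (b' (Suc i) (b i (b' k (b (Suc k) \<psi>))) - b' k (b (Suc k) (b' (Suc i) (b i \<psi>)))))"
    by (simp add: Mop_eq lower_def b_linear_simps scale_sum_right scale_right_diff_distrib
        sum_subtractf) (rule sum.swap)
  also have "\<dots> = (\<Sum>i\<in>{1..<l}. \<Sum>k\<in>{1..<l}.
      if i = k then ?c k *s (b' (Suc k) (b (Suc k) \<psi>) - b' k (b k \<psi>)) else 0)"
    by (intro sum.cong refl) (simp add: commutator_hops)
  finally show ?thesis
    by simp
qed

lemma commutator_ket: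
  assumes "S \<subseteq> {1..l}"
  shows "Mop l b b' (lower (ket S)) - lower (Mop l b b' (ket S)) = of_int (weight l S) *s ket S"
proof -
  have "Mop l b b' (lower (ket S)) - lower (Mop l b b' (ket S))
      = (\<Sum>k\<in>{1..<l}. of_int (int (k * (l - k)) * (of_bool (Suc k \<in> S) - of_bool (k \<in> S))) *s ket S)"
    using assms by (auto simp: Mop_lower_commutator number_ket scale_right_diff_distrib
        scale_left_diff_distrib intro!: sum.cong)
  also have "\<dots> = of_int (weight l S) *s ket S"
    by (simp only: scale_sum_left[symmetric] of_int_sum[symmetric] weight_by_parts[OF assms])
  finally show ?thesis .
qed

lemma Nop_ket:
  assumes "S \<subseteq> {1..l}"
  shows "Nop l b b' (ket S) = of_nat (card S) *s ket S"
proof -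
  have "Nop l b b' (ket S) = (\<Sum>k\<in>{1..l}. of_bool (k \<in> S) *s ket S)"
    using assms by (auto simp: Nop_def number_ket intro!: sum.cong)
  also have "\<dots> = of_nat (card S) *s ket S"
    using assms by (simp add: scale_sum_left[symmetric] Int_absorb1)
  finally show ?thesis .
qed

lemma Mop_ket:
  "S \<subseteq> {1..l} \<Longrightarrow>
    Mop l b b' (ket S) = (\<Sum>k\<in>{1..<l}. if k \<in> S \<and> Suc k \<notin> S then ket (insert (Suc k) (S - {k})) else 0)"
  unfolding Mop_eq by (rule sum.cong) (simp_all add: hop_up_ket)

lemma lower_ket:
  "S \<subseteq> {1..l} \<Longrightarrow> lower (ket S) = (\<Sum>k\<in>{1..<l}.
    of_nat (k * (l - k)) *s (if Suc k \<in> S \<and> k \<notin> S then ket (insert k (S - {Suc k})) else 0))"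
  unfolding lower_def by (rule sum.cong) (simp_all add: hop_down_ket)

definition weight_space :: "nat \<Rightarrow> int \<Rightarrow> 'v set" where
  "weight_space m t = span (ket ` {S \<in> ksubsets l m. weight l S = t})"

lemma image_weight_space_subset:
  assumes f: "Vector_Spaces.linear scale scale f"
    and "\<And>S. S \<in> ksubsets l m \<Longrightarrow> weight l S = t \<Longrightarrow> f (ket S) \<in> weight_space m t'"
  shows "f ` weight_space m t \<subseteq> weight_space m t'"
  unfolding weight_space_def[of m t] endo.linear_span_image[OF f, symmetric]
  using assms(2) by (intro span_minimal) (auto simp: weight_space_def)

lemma subspace_weight_space: "subspace (weight_space m t)"
  by (simp add: weight_space_def)

lemma ket_hop_weight_space:
  assumes "S \<in> ksubsets l m" "weight l S = t" "i \<in> S" "j \<notin> S" "j \<in> {1..l}"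
  shows "ket (insert j (S - {i})) \<in> weight_space m (t + 2 * (int j - int i))"
  using ksubsets_hop[OF assms(1,3-5)] assms(2) unfolding weight_space_def
  by (auto intro: span_base)

lemma Mop_weight_space: "x \<in> weight_space m t \<Longrightarrow> Mop l b b' x \<in> weight_space m (t + 2)"
proof -
  have "Mop l b b' (ket S) \<in> weight_space m (t + 2)"
    if "S \<in> ksubsets l m" "weight l S = t" for S
    using that ket_hop_weight_space[OF that, of k "Suc k" for k]
    by (auto simp: Mop_ket ksubsets_def intro!: subspace_sum subspace_weight_space subspace_0)
  then show "x \<in> weight_space m t \<Longrightarrow> Mop l b b' x \<in> weight_space m (t + 2)"
    using image_weight_space_subset[OF linear_Mop] by blast
qed

lemma lower_weight_space: "x \<in> weight_space m t \<Longrightarrow> lower x \<in> weight_space m (t - 2)"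
proof -
  have "lower (ket S) \<in> weight_space m (t - 2)"
    if "S \<in> ksubsets l m" "weight l S = t" for S
    using that ket_hop_weight_space[OF that, of "Suc k" k for k]
    by (auto simp: lower_ket ksubsets_def intro!: subspace_sum subspace_weight_space subspace_0
        subspace_scale)
  then show "x \<in> weight_space m t \<Longrightarrow> lower x \<in> weight_space m (t - 2)"
    using image_weight_space_subset[OF linear_lower] by blast
qed

lemma commutator_weight_space:
  assumes "x \<in> weight_space m t"
  shows "Mop l b b' (lower x) - lower (Mop l b b' x) = of_int t *s x"
proof -
  have "Vector_Spaces.linear scale scale (\<lambda>x. Mop l b b' (lower x) - lower (Mop l b b' x) - of_int t *s x)"
    using linear_Mop linear_lower
    by (intro endo.linear_compose_sub linear_scale_self) (auto simp: Vector_Spaces.linear_compose[unfolded comp_def])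
  moreover have "Mop l b b' (lower y) - lower (Mop l b b' y) - of_int t *s y = 0"
    if "y \<in> ket ` {S \<in> ksubsets l m. weight l S = t}" for y
    using that by (auto simp: commutator_ket ksubsets_def)
  ultimately have "Mop l b b' (lower x) - lower (Mop l b b' x) - of_int t *s x = 0"
    using endo.linear_eq_0_on_span assms[unfolded weight_space_def] by blast
  then show ?thesis
    by simp
qed

lemma sl2_weight_module_weight_space: "sl2_weight_module scale (Mop l b b') lower (weight_space m)"
proof (intro sl2_weight_module.intro sl2_weight_module_axioms.intro)
  have "weight_space m t = {0}" if "t < - (int m * (int l + 1))" for t
  proof -
    have empty: "{S \<in> ksubsets l m. weight l S = t} = {}"
      using weight_ge that by force
    show ?thesis
      unfolding weight_space_def empty by simp
  qed
  then show "\<exists>t\<^sub>0. \<forall>t<t\<^sub>0. weight_space m t \<subseteq> {0}"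
    by blast
qed (simp_all add: vector_space_axioms linear_Mop linear_lower Mop_weight_space lower_weight_space
    commutator_weight_space)

lemma dim_span_ket: "A \<subseteq> Pow {1..l} \<Longrightarrow> dim (span (ket ` A)) = card A"
  using independent_mono[OF independent_Basis image_mono] card_image[OF inj_on_subset[OF fock_vec_inj]]
  by (simp add: dim_eq_card_independent)

lemma dim_weight_space: "dim (weight_space m t) = card {S \<in> ksubsets l m. weight l S = t}"
  unfolding weight_space_def by (rule dim_span_ket) (auto simp: ksubsets_def)

lemma dim_image_Mop_pow_low_weight_space:
  assumes "t + int d \<le> 0"
  shows "dim ((Mop l b b' ^^ d) ` weight_space m t) = card {S \<in> ksubsets l m. weight l S = t}"
proof -
  interpret sl2_weight_module scale "Mop l b b'" lower "weight_space m"
    by (rule sl2_weight_module_weight_space)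
  have "{x \<in> weight_space m t. (Mop l b b' ^^ d) x = 0} \<subseteq> {0}"
    using E_pow_inj assms by blast
  then have "dim {x \<in> weight_space m t. (Mop l b b' ^^ d) x = 0} = 0"
    by simp
  then show ?thesis
    using dim_kernel_add_dim_image[OF subspace_weight_space[of m t] linear_funpow[OF linear_Mop, of d]]
    by (simp add: dim_weight_space del: dim_eq_0)
qed

lemma dim_image_Mop_pow_high_weight_space:
  assumes "0 < t + int d"
  shows "dim ((Mop l b b' ^^ d) ` weight_space m t) = card {S \<in> ksubsets l m. weight l S = t + 2 * int d}"
proof -
  interpret sl2_weight_module scale "Mop l b b'" lower "weight_space m"
    by (rule sl2_weight_module_weight_space)
  define u where "u = t + 2 * int d"
  define j where "j = nat (t + int d)"
  have "(Mop l b b' ^^ d) ` weight_space m t \<subseteq> weight_space m u"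
    using E_pow_weight by (auto simp: u_def)
  then have "dim ((Mop l b b' ^^ d) ` weight_space m t) \<le> card {S \<in> ksubsets l m. weight l S = u}"
    using dim_subset dim_weight_space by metis
  \<comment> \<open>for the lower bound, \<open>E\<^sup>d\<^sup>+\<^sup>j\<close> injects the mirror space of weight \<open>-u\<close> through weight \<open>t\<close>\<close>
  moreover have "(Mop l b b' ^^ (d + j)) ` weight_space m (- u) \<subseteq> (Mop l b b' ^^ d) ` weight_space m t"
    (is "?low \<subseteq> _")
  proof (rule image_subsetI)
    fix x assume "x \<in> weight_space m (- u)"
    then have "(Mop l b b' ^^ j) x \<in> weight_space m t"
      using E_pow_weight[of x "- u" j] assms by (simp add: u_def j_def)
    then show "(Mop l b b' ^^ (d + j)) x \<in> (Mop l b b' ^^ d) ` weight_space m t"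
      by (simp add: funpow_add)
  qed
  then have "dim ?low \<le> dim ((Mop l b b' ^^ d) ` weight_space m t)"
    by (rule dim_subset)
  moreover have "dim ?low = card {S \<in> ksubsets l m. weight l S = - u}"
    using assms by (intro dim_image_Mop_pow_low_weight_space) (simp add: u_def j_def)
  moreover have "{S \<in> ksubsets l m. weight l S = - u} = {S \<in> ksubsets l m. - weight l S = u}"
    by auto
  ultimately show ?thesis
    using card_ksubsets_weight_uminus[where P = "\<lambda>w. w = u"] by (simp add: u_def)
qed

lemma dim_image_Mop_pow_weight_space:
  "dim ((Mop l b b' ^^ d) ` weight_space m t)
    = card {S \<in> ksubsets l m. weight l S = (if t + int d \<le> 0 then t else t + 2 * int d)}"
  by (simp add: dim_image_Mop_pow_low_weight_space dim_image_Mop_pow_high_weight_space)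

lemma Vsp_eq_span: "Vsp scale l m b b' = span (ket ` ksubsets l m)"
proof -
  define \<mu> where "\<mu> v = (of_nat (card (inv_into (Pow {1..l}) ket v)) :: complex)" for v
  have \<mu>_ket: "\<mu> (ket S) = of_nat (card S)" if "S \<in> Pow {1..l}" for S
    using inv_into_f_f[OF fock_vec_inj that] by (simp add: \<mu>_def)
  have "Vsp scale l m b b' = span {v \<in> ket ` Pow {1..l}. \<mu> v = of_nat m}"
    unfolding Vsp_def using \<mu>_ket Nop_ket
    by (intro eigenspace_eq_span_eigenbasis[OF linear_Nop]) auto
  also have "{v \<in> ket ` Pow {1..l}. \<mu> v = of_nat m} = ket ` ksubsets l m"
    using \<mu>_ket by (auto simp: ksubsets_def)
  finally show ?thesis .
qed

lemma subspace_Vsp: "subspace (Vsp scale l m b b')"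
  by (simp add: Vsp_eq_span)

lemma dim_Vsp: "dim (Vsp scale l m b b') = card (ksubsets l m)"
  unfolding Vsp_eq_span by (rule dim_span_ket[OF ksubsets_subset_Pow])

lemma image_Mop_pow_Vsp:
  assumes "weight l ` ksubsets l m \<subseteq> I"
  shows "(Mop l b b' ^^ d) ` Vsp scale l m b b' = span (\<Union>t\<in>I. (Mop l b b' ^^ d) ` weight_space m t)"
    (is "?E ` ?V = span ?U")
proof
  have "?E (ket S) \<in> ?U" if "S \<in> ksubsets l m" for S
    using that assms unfolding weight_space_def by (blast intro: span_base)
  then show "?E ` ?V \<subseteq> span ?U"
    unfolding Vsp_eq_span endo.linear_span_image[OF linear_funpow[OF linear_Mop], symmetric]
    by (intro span_mono) blast
next
  have "weight_space m t \<subseteq> ?V" for t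
    unfolding Vsp_eq_span weight_space_def by (intro span_mono) blast
  then show "span ?U \<subseteq> ?E ` ?V"
    by (intro span_minimal endo.linear_subspace_image[OF linear_funpow[OF linear_Mop]] subspace_Vsp)
      blast
qed

lemma dim_image_Mop_pow_Vsp_eq_sum:
  assumes "finite I" "weight l ` ksubsets l m \<subseteq> I"
  shows "dim ((Mop l b b' ^^ d) ` Vsp scale l m b b') = (\<Sum>t\<in>I. dim ((Mop l b b' ^^ d) ` weight_space m t))"
  unfolding image_Mop_pow_Vsp[OF assms(2)]
proof (rule dim_span_UN_eq_sum[OF assms(1) independent_Basis])
  fix t assume "t \<in> I"
  let ?\<beta> = "ket ` {S \<in> ksubsets l m. weight l S = t + 2 * int d}"
  show "?\<beta> \<subseteq> ket ` Pow {1..l}"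
    by (auto simp: ksubsets_def)
  show "subspace ((Mop l b b' ^^ d) ` weight_space m t)"
    by (intro endo.linear_subspace_image[OF linear_funpow[OF linear_Mop]] subspace_weight_space)
  show "(Mop l b b' ^^ d) ` weight_space m t \<subseteq> span ?\<beta>"
    using sl2_weight_module.E_pow_weight[OF sl2_weight_module_weight_space]
    by (auto simp: weight_space_def)
next
  fix s t :: int assume "s \<noteq> t"
  then show "ket ` {S \<in> ksubsets l m. weight l S = s + 2 * int d}
      \<inter> ket ` {S \<in> ksubsets l m. weight l S = t + 2 * int d} = {}"
    by (subst inj_on_image_Int[OF fock_vec_inj, symmetric]) (auto simp: ksubsets_def)
qed

lemma dim_image_Mop_pow_Vsp:
  "dim ((Mop l b b' ^^ d) ` Vsp scale l m b b')
    = card {S \<in> ksubsets l m. weight l S \<le> - int d} + card {S \<in> ksubsets l m. int d < weight l S}"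
proof -
  define Lo where "Lo = {S \<in> ksubsets l m. weight l S \<le> - int d}"
  define Hi where "Hi = {S \<in> ksubsets l m. int d < weight l S}"
  \<comment> \<open>\<open>S\<close> is counted in the image of the weight space of weight \<open>g S\<close>\<close>
  define g where "g S = (if weight l S \<le> - int d then weight l S else weight l S - 2 * int d)" for S
  define I where "I = weight l ` ksubsets l m \<union> g ` ksubsets l m"
  have "dim ((Mop l b b' ^^ d) ` Vsp scale l m b b') = (\<Sum>t\<in>I. dim ((Mop l b b' ^^ d) ` weight_space m t))"
    by (rule dim_image_Mop_pow_Vsp_eq_sum) (auto simp: I_def)
  also have "\<dots> = (\<Sum>t\<in>I. card {S \<in> Lo \<union> Hi. g S = t})"
    by (intro sum.cong refl) (auto simp: dim_image_Mop_pow_weight_space Lo_def Hi_def g_def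
        intro!: arg_cong[where f = card])
  also have "\<dots> = card (Lo \<union> Hi)"
    using sum.group[of "Lo \<union> Hi" I g "\<lambda>_. 1::nat"] by (auto simp: I_def Lo_def Hi_def)
  also have "\<dots> = card Lo + card Hi"
    by (rule card_Un_disjoint) (auto simp: Lo_def Hi_def)
  finally show ?thesis
    by (simp add: Lo_def Hi_def)
qed

lemma dim_kerMpow:
  "dim (kerMpow scale l m b b' d) = card {S \<in> ksubsets l m. - int d < weight l S \<and> weight l S \<le> int d}"
proof -
  have "dim (kerMpow scale l m b b' d) + dim ((Mop l b b' ^^ d) ` Vsp scale l m b b') = card (ksubsets l m)"
    using dim_kernel_add_dim_image[OF subspace_Vsp linear_funpow[OF linear_Mop, of d]]
    by (simp add: kerMpow_def dim_Vsp)
  moreover have "card {S \<in> ksubsets l m. (weight l S \<le> - int d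
      \<or> (- int d < weight l S \<and> weight l S \<le> int d)) \<or> int d < weight l S}
    = card {S \<in> ksubsets l m. weight l S \<le> - int d}
      + card {S \<in> ksubsets l m. - int d < weight l S \<and> weight l S \<le> int d}
      + card {S \<in> ksubsets l m. int d < weight l S}"
    by (simp add: card_filter_disj)
  moreover have "{S \<in> ksubsets l m. (weight l S \<le> - int d
      \<or> (- int d < weight l S \<and> weight l S \<le> int d)) \<or> int d < weight l S} = ksubsets l m"
    by auto
  ultimately show ?thesis
    by (simp add: dim_image_Mop_pow_Vsp)
qed

lemma dim_kerMpow_Suc:
  "int (dim (kerMpow scale l m b b' (Suc d))) - int (dim (kerMpow scale l m b b' d))
    = int (card {S \<in> ksubsets l m. weight l S = - int d \<or> weight l S = - int d - 1})"
proof -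
  have "{S \<in> ksubsets l m. weight l S = int d + 1} = {S \<in> ksubsets l m. - weight l S = - int d - 1}"
    by auto
  then have "card {S \<in> ksubsets l m. weight l S = int d + 1} = card {S \<in> ksubsets l m. weight l S = - int d - 1}"
    using card_ksubsets_weight_uminus[where P = "\<lambda>w. w = - int d - 1"] by simp
  moreover have "{S \<in> ksubsets l m. - int (Suc d) < weight l S \<and> weight l S \<le> int (Suc d)}
    = {S \<in> ksubsets l m. (- int d < weight l S \<and> weight l S \<le> int d)
        \<or> (weight l S = - int d \<or> weight l S = int d + 1)}"
    by auto
  ultimately show ?thesis
    unfolding dim_kerMpow
    by (simp add: card_filter_disj)
qed

end

theorem corollary1:
  fixes scale :: "complex \<Rightarrow> 'v::ab_group_add \<Rightarrow> 'v"
    and b b' :: "nat \<Rightarrow> 'v \<Rightarrow> 'v" and r :: 'v and l m d :: nat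
  assumes vs: "vector_space scale"
    and lin_b: "\<And>k. k \<in> {1..l} \<Longrightarrow> Vector_Spaces.linear scale scale (b k)"
    and lin_b': "\<And>k. k \<in> {1..l} \<Longrightarrow> Vector_Spaces.linear scale scale (b' k)"
    and car_bb: "\<And>j k \<psi>. j \<in> {1..l} \<Longrightarrow> k \<in> {1..l} \<Longrightarrow> b j (b k \<psi>) + b k (b j \<psi>) = 0"
    and car_b'b': "\<And>j k \<psi>. j \<in> {1..l} \<Longrightarrow> k \<in> {1..l} \<Longrightarrow> b' j (b' k \<psi>) + b' k (b' j \<psi>) = 0"
    and car_bb': "\<And>j k \<psi>. j \<in> {1..l} \<Longrightarrow> k \<in> {1..l} \<Longrightarrow>
                    b j (b' k \<psi>) + b' k (b j \<psi>) = (if j = k then \<psi> else 0)"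
    and vac: "\<And>k. k \<in> {1..l} \<Longrightarrow> b k r = 0"
    and basis_inj: "inj_on (fock_vec b' r) (Pow {1..l})"
    and basis_indep: "\<not> module.dependent scale (fock_vec b' r ` Pow {1..l})"
    and basis_span: "module.span scale (fock_vec b' r ` Pow {1..l}) = UNIV"
    and l: "1 \<le> l" and m: "m \<le> l" and d: "1 \<le> d"
  shows "int (vector_space.dim scale (kerMpow scale l m b b' d))
           - int (vector_space.dim scale (kerMpow scale l m b b' (d - 1)))
         = (let e = (int m * (int l - int m) - (int d - 1)) div 2
            in if e < 0 then 0 else poly.coeff (qbinom l m) (nat e))"
proof -
  interpret fock_space scale b b' r l
    using vs basis_indep basis_span lin_b lin_b' car_bb car_b'b' car_bb' vac basis_inj
    by (simp add: fock_space_def fock_space_axioms_def finite_dimensional_vector_space_def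
        finite_dimensional_vector_space_axioms_def)
  obtain c where c: "d = Suc c"
    using d by (cases d) auto
  define e where "e = (int m * (int l - int m) - int c) div 2"
  have "int (dim (kerMpow scale l m b b' (Suc c))) - int (dim (kerMpow scale l m b b' c))
      = int (card {S \<in> ksubsets l m. weight l S = - int c \<or> weight l S = - int c - 1})"
    by (rule dim_kerMpow_Suc)
  also have "{S \<in> ksubsets l m. weight l S = - int c \<or> weight l S = - int c - 1}
      = {S \<in> ksubsets l m. int (\<Sum>S) - int (\<Sum>{1..m}) = e}"
    unfolding e_def using weight_eq_iff_excess by blast
  also have "int (card \<dots>) = (if e < 0 then 0 else coeff (qbinom l m) (nat e))"
    by (rule coeff_qbinom_excess[OF m])
  finally show ?thesis
    by (simp add: c e_def)
qed

end
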